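(* For any two distinct primes $p\neq q$, $\mathrm{CSP}(\mathbf Z_p)\not\le_{\mathrm{DL}}\mathrm{CSP}(\mathbf Z_q)$.
   Context: Structures. A (multisorted relational) signature consists of types and relation symbols, each symbol $R$ having an arity $\mathrm{ar}_R$, a tuple of types. A structure $\mathbf A$ consists of a set $A_t$ per type and relations $R^{\mathbf A}\subseteq A_{\mathrm{ar}_R(1)}\times\dots\times A_{\mathrm{ar}_R(k)}$. A homomorphism is a type-preserving family of maps preserving all relations; write $\mathbf A\to\mathbf B$. $\mathrm{CSP}(\mathbf A)$: given finite $\mathbf X$, decide whether $\mathbf X\to\mathbf A$. A map $\psi$ on structures is a reduction from $\mathrm{CSP}(\mathbf A)$ to $\mathrm{CSP}(\mathbf B)$ if $\mathbf X\to\mathbf A\Rightarrow\psi(\mathbf X)\to\mathbf B$ and $\psi(\mathbf X)\to\mathbf B\Rightarrow\mathbf X\to\mathbf A$. Group templates. For $n\ge 2$, $\mathbf Z_n$ is the single-sorted structure with domain $\mathbb Z_n=\{0,\dots,n-1\}$, the ternary relation $\{(x_1,x_2,y)\mid x_1+x_2\equiv y \pmod n\}$, and a unary relation $\{b\}$ for each $b\in\mathbb Z_n$ (so $\mathrm{CSP}(\mathbf Z_n)$ is solving systems of linear equations modulo $n$). Datalog interpretations. A Datalog program with input signature $\Pi$: a signature $\Delta\supseteq\Pi$ with the same types, finitely many rules $t_0\leftarrow t_1,\dots,t_r$ with typed atomic $\Delta$-formulas (relational atoms or equalities; heads use neither $\Pi$-symbols nor equality), a designated output symbol, least-fixed-point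 semantics. A Datalog interpretation $\phi$ from $\Pi$- to $\Sigma$-structures: a program $\phi_t$ per $\Sigma$-type and $\phi_R$ per $\Sigma$-symbol (arity of $\phi_R$ = concatenation of arities of $\phi_{\mathrm{ar}_R(i)}$); $\phi(\mathbf A)$ has $t$-th domain $\phi_t(\mathbf A)$ and $(w_1,\dots,w_k)\in R^{\phi(\mathbf A)}$ iff the concatenation is in $\phi_R(\mathbf A)$. Union gadgets and $\le_{\mathrm{DL}}$. A union gadget $\upsilon=(d,r)$ from $\Pi$ to $\Sigma$: maps $d$ ($\Pi$-types to $\Sigma$-types) and $r$ ($\Pi$-symbols to $\Sigma$-symbols) with $\mathrm{ar}_{r(R)}=d\circ\mathrm{ar}_R$; $\upsilon(\mathbf A)$ has $t$-th domain the disjoint union of the $A_s$ with $d(s)=t$, and $S^{\upsilon(\mathbf A)}=\bigcup_{r(R)=S}R^{\mathbf A}$. A Datalog$^\cup$ reduction is a composition $\upsilon\circ\phi$; $\mathrm{CSP}(\mathbf A)\le_{\mathrm{DL}}\mathrm{CSP}(\mathbf B)$ means some Datalog$^\cup$ reduction is a reduction from $\mathrm{CSP}(\mathbf A)$ to $\mathrm{CSP}(\mathbf B)$. *)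

theory Defs
  imports "HOL-Computational_Algebra.Primes"
begin

record sig =
  tys  :: "nat set"
  syms :: "nat set"
  ar   :: "nat \<Rightarrow> nat list"

definition wf_sig :: "sig \<Rightarrow> bool" where
  "wf_sig S \<longleftrightarrow> finite (tys S) \<and> finite (syms S) \<and>
     (\<forall>R\<in>syms S. set (ar S R) \<subseteq> tys S)"

record 'a struct =
  sdom :: "nat \<Rightarrow> 'a set"
  srel :: "nat \<Rightarrow> 'a list set"

definition is_struct :: "sig \<Rightarrow> 'a struct \<Rightarrow> bool" where
  "is_struct S A \<longleftrightarrow>
     (\<forall>R\<in>syms S. \<forall>xs\<in>srel A R. length xs = length (ar S R) \<and>
        (\<forall>i<length xs. xs ! i \<in> sdom A (ar S R ! i)))"

definition finite_struct :: "sig \<Rightarrow> 'a struct \<Rightarrow> bool" where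
  "finite_struct S A \<longleftrightarrow> (\<forall>t\<in>tys S. finite (sdom A t))"

definition hom :: "sig \<Rightarrow> 'a struct \<Rightarrow> 'b struct \<Rightarrow> (nat \<Rightarrow> 'a \<Rightarrow> 'b) \<Rightarrow> bool" where
  "hom S A B h \<longleftrightarrow>
     (\<forall>t\<in>tys S. \<forall>x\<in>sdom A t. h t x \<in> sdom B t) \<and>
     (\<forall>R\<in>syms S. \<forall>xs\<in>srel A R.
        map (\<lambda>i. h (ar S R ! i) (xs ! i)) [0..<length xs] \<in> srel B R)"

definition homto :: "sig \<Rightarrow> 'a struct \<Rightarrow> 'b struct \<Rightarrow> bool" where
  "homto S A B \<longleftrightarrow> (\<exists>h. hom S A B h)"

text \<open>Single type 0; symbol 0 is the ternary addition relation, symbol b+1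
(for b < n) is the unary constant relation {b}.\<close>
definition zsig :: "nat \<Rightarrow> sig" where
  "zsig n = \<lparr> tys = {0}, syms = {0..n}, ar = (\<lambda>R. if R = 0 then [0,0,0] else [0]) \<rparr>"

definition zstruct :: "nat \<Rightarrow> nat struct" where
  "zstruct n = \<lparr> sdom = (\<lambda>_. {..<n}),
      srel = (\<lambda>R. if R = 0
                   then {[x1, x2, y] | x1 x2 y. x1 < n \<and> x2 < n \<and> y < n \<and> (x1 + x2) mod n = y}
                   else {[R - 1]}) \<rparr>"

datatype atom = Rel nat "nat list" | Eq nat nat

record rule =
  head_sym  :: nat
  head_vars :: "nat list"
  body      :: "atom list"
  vty       :: "nat \<Rightarrow> nat"

fun atom_vars :: "atom \<Rightarrow> nat set" where
  "atom_vars (Rel R vs) = set vs"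
| "atom_vars (Eq v w) = {v, w}"

definition rule_vars :: "rule \<Rightarrow> nat set" where
  "rule_vars r = set (head_vars r) \<union> (\<Union>a\<in>set (body r). atom_vars a)"

fun wt_atom :: "sig \<Rightarrow> (nat \<Rightarrow> nat) \<Rightarrow> atom \<Rightarrow> bool" where
  "wt_atom D ty (Rel R vs) \<longleftrightarrow> R \<in> syms D \<and> length vs = length (ar D R) \<and>
      (\<forall>i<length vs. ty (vs ! i) = ar D R ! i)"
| "wt_atom D ty (Eq v w) \<longleftrightarrow> ty v = ty w"

record dprog =
  psig   :: sig
  prules :: "rule list"
  pout   :: nat

definition wf_prog :: "sig \<Rightarrow> dprog \<Rightarrow> bool" where
  "wf_prog Pi P \<longleftrightarrow>
     wf_sig (psig P) \<and> tys (psig P) = tys Pi \<and> syms Pi \<subseteq> syms (psig P) \<and>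
     (\<forall>R\<in>syms Pi. ar (psig P) R = ar Pi R) \<and>
     pout P \<in> syms (psig P) \<and>
     (\<forall>r\<in>set (prules P).
        head_sym r \<notin> syms Pi \<and>
        wt_atom (psig P) (vty r) (Rel (head_sym r) (head_vars r)) \<and>
        (\<forall>a\<in>set (body r). wt_atom (psig P) (vty r) a) \<and>
        (\<forall>v\<in>rule_vars r. vty r v \<in> tys (psig P)))"

fun holds :: "(nat \<Rightarrow> 'a list set) \<Rightarrow> (nat \<Rightarrow> 'a) \<Rightarrow> atom \<Rightarrow> bool" where
  "holds I \<nu> (Rel R vs) \<longleftrightarrow> map \<nu> vs \<in> I R"
| "holds I \<nu> (Eq v w) \<longleftrightarrow> \<nu> v = \<nu> w"

definition full_rels :: "sig \<Rightarrow> 'a struct \<Rightarrow> (nat \<Rightarrow> 'a list set) \<Rightarrow> nat \<Rightarrow> 'a list set" where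
  "full_rels Pi A I = (\<lambda>R. if R \<in> syms Pi then srel A R else I R)"

definition dl_step :: "sig \<Rightarrow> dprog \<Rightarrow> 'a struct \<Rightarrow> (nat \<Rightarrow> 'a list set) \<Rightarrow> nat \<Rightarrow> 'a list set" where
  "dl_step Pi P A I = (\<lambda>R. {map \<nu> (head_vars r) | r \<nu>.
       r \<in> set (prules P) \<and> head_sym r = R \<and>
       (\<forall>v\<in>rule_vars r. \<nu> v \<in> sdom A (vty r v)) \<and>
       (\<forall>a\<in>set (body r). holds (full_rels Pi A I) \<nu> a)})"

definition dl_rels :: "sig \<Rightarrow> dprog \<Rightarrow> 'a struct \<Rightarrow> nat \<Rightarrow> 'a list set" where
  "dl_rels Pi P A = full_rels Pi A (lfp (dl_step Pi P A))"

definition dl_out :: "sig \<Rightarrow> dprog \<Rightarrow> 'a struct \<Rightarrow> 'a list set" where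
  "dl_out Pi P A = dl_rels Pi P A (pout P)"

definition outar :: "dprog \<Rightarrow> nat list" where
  "outar P = ar (psig P) (pout P)"

record dint =
  dt :: "nat \<Rightarrow> dprog"
  dr :: "nat \<Rightarrow> dprog"

definition wf_dint :: "sig \<Rightarrow> sig \<Rightarrow> dint \<Rightarrow> bool" where
  "wf_dint Pi Sg phi \<longleftrightarrow> wf_sig Pi \<and> wf_sig Sg \<and>
     (\<forall>t\<in>tys Sg. wf_prog Pi (dt phi t)) \<and>
     (\<forall>R\<in>syms Sg. wf_prog Pi (dr phi R) \<and>
        outar (dr phi R) = concat (map (\<lambda>t. outar (dt phi t)) (ar Sg R)))"

definition apply_dint :: "sig \<Rightarrow> sig \<Rightarrow> dint \<Rightarrow> 'a struct \<Rightarrow> 'a list struct" where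
  "apply_dint Pi Sg phi A =
     \<lparr> sdom = (\<lambda>t. dl_out Pi (dt phi t) A),
       srel = (\<lambda>R. {ws. length ws = length (ar Sg R) \<and>
                    (\<forall>i<length ws. ws ! i \<in> dl_out Pi (dt phi (ar Sg R ! i)) A) \<and>
                    concat ws \<in> dl_out Pi (dr phi R) A}) \<rparr>"

record ugad =
  ud :: "nat \<Rightarrow> nat"
  ur :: "nat \<Rightarrow> nat"

definition wf_ugad :: "sig \<Rightarrow> sig \<Rightarrow> ugad \<Rightarrow> bool" where
  "wf_ugad Sg Sg' u \<longleftrightarrow>
     (\<forall>t\<in>tys Sg. ud u t \<in> tys Sg') \<and>
     (\<forall>R\<in>syms Sg. ur u R \<in> syms Sg' \<and> ar Sg' (ur u R) = map (ud u) (ar Sg R))"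

text \<open>Disjoint unions are realised by tagging each element with its source type.\<close>
definition apply_ugad :: "sig \<Rightarrow> ugad \<Rightarrow> 'b struct \<Rightarrow> (nat \<times> 'b) struct" where
  "apply_ugad Sg u A =
     \<lparr> sdom = (\<lambda>t. {(s, x). s \<in> tys Sg \<and> ud u s = t \<and> x \<in> sdom A s}),
       srel = (\<lambda>S. \<Union>R\<in>{R\<in>syms Sg. ur u R = S}.
                 (\<lambda>xs. map (\<lambda>i. (ar Sg R ! i, xs ! i)) [0..<length xs]) ` srel A R) \<rparr>"

text \<open>Instances are finite structures; w.l.o.g. (Datalog is isomorphism invariant)
their elements are natural numbers.\<close>
definition is_reduction ::
  "sig \<Rightarrow> 'a struct \<Rightarrow> sig \<Rightarrow> 'b struct \<Rightarrow> (nat struct \<Rightarrow> 'c struct) \<Rightarrow> bool" where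
  "is_reduction S A S' B psi \<longleftrightarrow>
     (\<forall>X::nat struct. is_struct S X \<and> finite_struct S X \<longrightarrow>
        (homto S X A \<longrightarrow> homto S' (psi X) B) \<and> (homto S' (psi X) B \<longrightarrow> homto S X A))"

definition dl_le :: "sig \<Rightarrow> 'a struct \<Rightarrow> sig \<Rightarrow> 'b struct \<Rightarrow> bool" where
  "dl_le S A S' B \<longleftrightarrow>
     (\<exists>Sg phi u. wf_dint S Sg phi \<and> wf_ugad Sg S' u \<and>
        is_reduction S A S' B (\<lambda>X. apply_ugad Sg u (apply_dint S Sg phi X)))"

end

(* A Datalog reduction whose rules use at most K variables cannot separate an instance X from Z_p
   as long as Duplicator wins the existential K-pebble game from X to Z_p: every tuple of the
   reduct of X is then the image of a tuple of the reduct of Z_p under a partial solution of X.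
   Take for X a Tseitin-type system on the complete graph K_n, n >= 3K+3, with total charge 1; it
   has no solution over Z_p. Moving the charge -1 to a row d untouched by the pebbles gives a
   solution set W_d, and pushing a unit of flow along two edges gives bijections W_d -> W_e that
   fix any K pebbled variables. Now average a homomorphism H from the reduct of Z_p to Z_q over
   W_d: solutions of linear equations over Z_q are closed under affine combinations, and |W_d| is
   a power of p, hence invertible modulo q. This yields a homomorphism from the reduct of X to
   Z_q, so X would have to be satisfiable over Z_p. *)

theory Submission
  imports Defs "HOL-Library.FuncSet" "HOL-Library.Nat_Bijection" "HOL-Number_Theory.Cong"
    "HOL-Algebra.Product_Groups"
begin

hide_const (open) Group.hom \<comment> \<open>it would shadow the homomorphisms of Defs\<close>

section \<open>Datalog and the existential pebble game\<close>

definition dl_width_le :: "nat \<Rightarrow> dprog \<Rightarrow> bool" where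
  "dl_width_le K P \<longleftrightarrow> (\<forall>r\<in>set (prules P). card (rule_vars r) \<le> K)"

definition dint_width_le :: "nat \<Rightarrow> sig \<Rightarrow> dint \<Rightarrow> bool" where
  "dint_width_le K Sg phi \<longleftrightarrow>
     (\<forall>t\<in>tys Sg. dl_width_le K (dt phi t)) \<and> (\<forall>R\<in>syms Sg. dl_width_le K (dr phi R))"

lemma finite_rule_vars: "finite (rule_vars r)"
proof -
  have "finite (atom_vars a)" for a by (cases a) auto
  then show ?thesis by (simp add: rule_vars_def)
qed

lemma holds_mono: "(\<And>R. I R \<subseteq> J R) \<Longrightarrow> holds I \<nu> a \<Longrightarrow> holds J \<nu> a"
  by (cases a) auto

lemma mono_dl_step: "mono (dl_step Src P A)"
proof (rule monoI)
  fix I J :: "nat \<Rightarrow> 'a list set"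
  assume "I \<le> J"
  then have "full_rels Src A I R \<subseteq> full_rels Src A J R" for R
    by (auto simp: full_rels_def le_fun_def)
  then show "dl_step Src P A I \<le> dl_step Src P A J"
    unfolding dl_step_def le_fun_def by (blast intro: holds_mono)
qed

text \<open>Duplicator's winning strategy in the existential K-pebble game from X to B, as a family
  of partial homomorphisms indexed by their domains. Rules with at most K variables cannot
  distinguish X from B.\<close>
locale pebble_strategy =
  fixes Src :: sig and X :: "'a struct" and B :: "'b struct"
    and adm :: "'a set \<Rightarrow> ('a \<Rightarrow> 'b) \<Rightarrow> bool" and K :: nat
  assumes adm_dom: "adm S F \<Longrightarrow> t \<in> tys Src \<Longrightarrow> x \<in> sdom X t \<Longrightarrow> F x \<in> sdom B t"
    and adm_rel: "adm S F \<Longrightarrow> R \<in> syms Src \<Longrightarrow> xs \<in> srel X R \<Longrightarrow> set xs \<subseteq> S \<Longrightarrow>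
      map F xs \<in> srel B R"
    and adm_restrict: "adm S F \<Longrightarrow> T \<subseteq> S \<Longrightarrow> adm T F"
    and adm_extend: "adm T F \<Longrightarrow> T \<subseteq> S \<Longrightarrow> finite S \<Longrightarrow> card S \<le> K \<Longrightarrow>
      \<exists>F'. adm S F' \<and> (\<forall>x\<in>T. F' x = F x)"
    and small_tuples: "R \<in> syms Src \<Longrightarrow> xs \<in> srel X R \<Longrightarrow> card (set xs) \<le> K"
begin

lemma dl_lfp_transfer:
  assumes wf: "wf_prog Src P" and width: "dl_width_le K P"
  shows "lfp (dl_step Src P X) \<le>
    (\<lambda>R. {as. card (set as) \<le> K \<and> (\<forall>F. adm (set as) F \<longrightarrow> map F as \<in> lfp (dl_step Src P B) R)})"
    (is "_ \<le> ?Phi")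
proof (rule lfp_lowerbound, intro le_funI subsetI)
  let ?LB = "lfp (dl_step Src P B)"
  fix R as
  assume "as \<in> dl_step Src P X ?Phi R"
  then obtain r \<nu> where as: "as = map \<nu> (head_vars r)" and r: "r \<in> set (prules P)"
    and head: "head_sym r = R" and \<nu>: "\<forall>v\<in>rule_vars r. \<nu> v \<in> sdom X (vty r v)"
    and body: "\<forall>a\<in>set (body r). holds (full_rels Src X ?Phi) \<nu> a"
    unfolding dl_step_def by blast
  let ?U = "\<nu> ` rule_vars r"
  have finU: "finite ?U" by (simp add: finite_rule_vars)
  have cardU: "card ?U \<le> K"
    using width r card_image_le[OF finite_rule_vars, of \<nu> r] by (force simp: dl_width_le_def)
  have head_U: "set as \<subseteq> ?U" using as by (auto simp: rule_vars_def)
  have vty: "vty r v \<in> tys Src" if "v \<in> rule_vars r" for v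
    using wf r that unfolding wf_prog_def by auto
  have "map F as \<in> ?LB R" if F: "adm (set as) F" for F
  proof -
    obtain F' where F': "adm ?U F'" and agree: "\<forall>x\<in>set as. F' x = F x"
      using adm_extend[OF F head_U finU cardU] by blast
    have "\<forall>a\<in>set (body r). holds (full_rels Src B ?LB) (F' \<circ> \<nu>) a"
    proof
      fix a assume a: "a \<in> set (body r)"
      show "holds (full_rels Src B ?LB) (F' \<circ> \<nu>) a"
      proof (cases a)
        case (Rel S vs)
        have in_X: "map \<nu> vs \<in> full_rels Src X ?Phi S" using body a Rel by auto
        have vs_U: "set (map \<nu> vs) \<subseteq> ?U" using a Rel by (force simp: rule_vars_def)
        show ?thesis
        proof (cases "S \<in> syms Src")
          case True
          then show ?thesis
            using adm_rel[OF F' True _ vs_U] in_X Rel by (simp add: full_rels_def)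
        next
          case False
          then show ?thesis
            using in_X adm_restrict[OF F' vs_U] Rel by (simp add: full_rels_def)
        qed
      qed (use body a in auto)
    qed
    moreover have "\<forall>v\<in>rule_vars r. (F' \<circ> \<nu>) v \<in> sdom B (vty r v)"
      using adm_dom[OF F' vty] \<nu> by simp
    ultimately have "map (F' \<circ> \<nu>) (head_vars r) \<in> dl_step Src P B ?LB R"
      unfolding dl_step_def using r head by blast
    then have "map (F' \<circ> \<nu>) (head_vars r) \<in> ?LB R"
      by (simp add: lfp_fixpoint[OF mono_dl_step])
    moreover have "map (F' \<circ> \<nu>) (head_vars r) = map F as"
      using agree as by auto
    ultimately show ?thesis by simp
  qed
  moreover have "card (set as) \<le> K" using card_mono[OF finU head_U] cardU by simp
  ultimately show "as \<in> ?Phi R" by simp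
qed

lemma dl_out_card_le:
  assumes "wf_prog Src P" "dl_width_le K P" "as \<in> dl_out Src P X"
  shows "card (set as) \<le> K"
  using assms dl_lfp_transfer[OF assms(1,2)] small_tuples
  by (auto simp: dl_out_def dl_rels_def full_rels_def le_fun_def split: if_splits)

lemma dl_out_transfer:
  assumes "wf_prog Src P" "dl_width_le K P" "as \<in> dl_out Src P X" "adm (set as) F"
  shows "map F as \<in> dl_out Src P B"
  using assms dl_lfp_transfer[OF assms(1,2)] adm_rel[OF assms(4)]
  by (auto simp: dl_out_def dl_rels_def full_rels_def le_fun_def split: if_splits)

lemma dint_tuple_transfer:
  assumes wf: "wf_dint Src Sg phi" and width: "dint_width_le K Sg phi"
    and R: "R \<in> syms Sg" and ws: "ws \<in> srel (apply_dint Src Sg phi X) R"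
  shows "card (set (concat ws)) \<le> K"
    and "adm (set (concat ws)) F \<Longrightarrow> map (map F) ws \<in> srel (apply_dint Src Sg phi B) R"
proof -
  have len: "length ws = length (ar Sg R)"
    and ws_k: "\<And>k. k < length ws \<Longrightarrow> ws ! k \<in> dl_out Src (dt phi (ar Sg R ! k)) X"
    and ws_concat: "concat ws \<in> dl_out Src (dr phi R) X"
    using ws by (auto simp: apply_dint_def)
  have wf_R: "wf_prog Src (dr phi R)" and width_R: "dl_width_le K (dr phi R)"
    using wf width R by (auto simp: wf_dint_def dint_width_le_def)
  have "set (ar Sg R) \<subseteq> tys Sg" using wf R by (simp add: wf_dint_def wf_sig_def)
  then have "ar Sg R ! k \<in> tys Sg" if "k < length ws" for k
    using len nth_mem that by (metis subsetD)
  then have wf_k: "wf_prog Src (dt phi (ar Sg R ! k))" and width_k: "dl_width_le K (dt phi (ar Sg R ! k))"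
    if "k < length ws" for k
    using wf width that by (auto simp: wf_dint_def dint_width_le_def)
  show "card (set (concat ws)) \<le> K"
    by (rule dl_out_card_le[OF wf_R width_R ws_concat])
  assume F: "adm (set (concat ws)) F"
  have "map F (ws ! k) \<in> dl_out Src (dt phi (ar Sg R ! k)) B" if k: "k < length ws" for k
  proof (rule dl_out_transfer[OF wf_k[OF k] width_k[OF k] ws_k[OF k]])
    show "adm (set (ws ! k)) F"
      using adm_restrict[OF F] nth_mem[OF k] by (force simp: set_concat)
  qed
  moreover have "concat (map (map F) ws) \<in> dl_out Src (dr phi R) B"
    using dl_out_transfer[OF wf_R width_R ws_concat F] by (simp add: map_concat)
  ultimately show "map (map F) ws \<in> srel (apply_dint Src Sg phi B) R"
    using len by (simp add: apply_dint_def)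
qed

lemma reduction_tuple_transfer:
  assumes wf: "wf_dint Src Sg phi" and width: "dint_width_le K Sg phi"
    and xs: "xs \<in> srel (apply_ugad Sg u (apply_dint Src Sg phi X)) S"
  shows "card (\<Union>x\<in>set xs. set (snd x)) \<le> K"
    and "adm (\<Union>x\<in>set xs. set (snd x)) F \<Longrightarrow>
      map (apsnd (map F)) xs \<in> srel (apply_ugad Sg u (apply_dint Src Sg phi B)) S"
proof -
  obtain R ws where R: "R \<in> syms Sg" "ur u R = S"
    and ws: "ws \<in> srel (apply_dint Src Sg phi X) R"
    and xs_ws: "xs = map (\<lambda>i. (ar Sg R ! i, ws ! i)) [0..<length ws]"
    using xs by (auto simp: apply_ugad_def)
  have "map snd xs = ws" by (simp add: xs_ws comp_def map_nth)
  then have supp: "(\<Union>x\<in>set xs. set (snd x)) = set (concat ws)"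
    by (metis image_image list.set_map set_concat)
  show "card (\<Union>x\<in>set xs. set (snd x)) \<le> K"
    unfolding supp by (rule dint_tuple_transfer(1)[OF wf width R(1) ws])
  assume "adm (\<Union>x\<in>set xs. set (snd x)) F"
  then have "map (map F) ws \<in> srel (apply_dint Src Sg phi B) R"
    unfolding supp by (rule dint_tuple_transfer(2)[OF wf width R(1) ws])
  then have "map (apsnd (map F)) xs \<in> (\<lambda>xs. map (\<lambda>i. (ar Sg R ! i, xs ! i)) [0..<length xs]) `
      srel (apply_dint Src Sg phi B) R"
    by (rule rev_image_eqI) (simp add: xs_ws)
  then show "map (apsnd (map F)) xs \<in> srel (apply_ugad Sg u (apply_dint Src Sg phi B)) S"
    using R unfolding apply_ugad_def by auto
qed

end

section \<open>Linear equations modulo n\<close>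

lemma hom_zsig_iff:
  assumes len: "\<forall>R\<in>{0..p}. \<forall>xs\<in>srel A R. length xs = length (ar (zsig p) R)"
  shows "hom (zsig p) A B h \<longleftrightarrow>
    (\<forall>x\<in>sdom A 0. h 0 x \<in> sdom B 0) \<and> (\<forall>R\<in>{0..p}. \<forall>xs\<in>srel A R. map (h 0) xs \<in> srel B R)"
proof -
  have "map (\<lambda>i. h (ar (zsig p) R ! i) (xs ! i)) [0..<length xs] = map (h 0) xs"
    if "length xs = length (ar (zsig p) R)" for R xs
    using that by (intro nth_equalityI) (auto simp: zsig_def nth_Cons split: if_splits nat.splits)
  with len show ?thesis
    by (auto simp: Defs.hom_def zsig_def)
qed

lemma zstruct_sum_iff: "[a, b, c] \<in> srel (zstruct p) 0 \<longleftrightarrow> a < p \<and> b < p \<and> c < p \<and> (a + b) mod p = c"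
  by (auto simp: zstruct_def)

lemma zstruct_const_iff: "0 < R \<Longrightarrow> xs \<in> srel (zstruct p) R \<longleftrightarrow> xs = [R - 1]"
  by (simp add: zstruct_def)

lemma zstruct_struct: "is_struct (zsig p) (zstruct p)" "finite_struct (zsig p) (zstruct p)"
  by (auto simp: is_struct_def finite_struct_def zsig_def zstruct_def less_Suc_eq nth_Cons
      split: nat.splits)

lemma homto_zstruct_self: "homto (zsig p) (zstruct p) (zstruct p)"
proof -
  have "hom (zsig p) (zstruct p) (zstruct p) (\<lambda>t x. x)"
    unfolding Defs.hom_def by (simp add: map_nth)
  then show ?thesis unfolding homto_def by blast
qed

text \<open>The solution set of a linear equation over Z/q is closed under affine combinations; here
  all weights equal c, the inverse of the number of summands modulo q.\<close>
lemma zstruct_affine_comb: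
  fixes f :: "'w \<Rightarrow> 'x \<Rightarrow> nat"
  assumes q: "1 < q" and R: "R \<le> q" and W: "finite W" "W \<noteq> {}" and c: "[card W * c = 1] (mod q)"
    and rel: "\<And>w. w \<in> W \<Longrightarrow> map (f w) xs \<in> srel (zstruct q) R"
  shows "map (\<lambda>x. c * (\<Sum>w\<in>W. f w x) mod q) xs \<in> srel (zstruct q) R"
proof -
  obtain w0 where w0: "w0 \<in> W" using W by blast
  show ?thesis
  proof (cases "R = 0")
    case True
    obtain a b d where xs: "xs = [a, b, d]"
      using rel[OF w0] True by (auto simp: zstruct_def)
    have "[f w a + f w b = f w d] (mod q)" if "w \<in> W" for w
      using rel[OF that] True xs by (simp add: zstruct_sum_iff cong_def)
    then have "[(\<Sum>w\<in>W. f w a) + (\<Sum>w\<in>W. f w b) = (\<Sum>w\<in>W. f w d)] (mod q)"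
      unfolding sum.distrib[symmetric] by (rule cong_sum)
    then have "[c * (\<Sum>w\<in>W. f w a) + c * (\<Sum>w\<in>W. f w b) = c * (\<Sum>w\<in>W. f w d)] (mod q)"
      unfolding distrib_left[symmetric] by (rule cong_scalar_left)
    then have "((c * (\<Sum>w\<in>W. f w a)) mod q + (c * (\<Sum>w\<in>W. f w b)) mod q) mod q =
        c * (\<Sum>w\<in>W. f w d) mod q"
      unfolding cong_def mod_add_eq .
    then show ?thesis
      using True xs q by (simp add: zstruct_sum_iff)
  next
    case False
    obtain x where xs: "xs = [x]"
      using rel[OF w0] False by (cases xs) (auto simp: zstruct_const_iff)
    have "f w x = R - 1" if "w \<in> W" for w
      using rel[OF that] False xs by (simp add: zstruct_const_iff)
    then have "(\<Sum>w\<in>W. f w x) = card W * (R - 1)" by simp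
    then have "[c * (\<Sum>w\<in>W. f w x) = R - 1] (mod q)"
      using cong_scalar_right[OF c, of "R - 1"] by (simp add: ac_simps)
    then show ?thesis
      using False xs R q by (simp add: zstruct_const_iff cong_def)
  qed
qed

definition mod_add_group :: "nat \<Rightarrow> nat monoid" where
  "mod_add_group p = \<lparr>carrier = {..<p}, monoid.mult = (\<lambda>x y. (x + y) mod p), one = 0\<rparr>"

lemma group_mod_add_group: "0 < p \<Longrightarrow> group (mod_add_group p)"
proof (rule groupI)
  fix x assume "0 < p" "x \<in> carrier (mod_add_group p)"
  then show "\<exists>y\<in>carrier (mod_add_group p). y \<otimes>\<^bsub>mod_add_group p\<^esub> x = \<one>\<^bsub>mod_add_group p\<^esub>"
    by (intro bexI[of _ "(p - x) mod p"]) (auto simp: mod_add_group_def mod_add_left_eq)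
qed (auto simp: mod_add_group_def mod_add_left_eq mod_add_right_eq add.assoc)

lemma inv_mod_add_group:
  assumes "0 < p" "x < p" shows "inv\<^bsub>mod_add_group p\<^esub> x = (p - x) mod p"
  by (rule group.inv_equality[OF group_mod_add_group])
    (use assms in \<open>auto simp: mod_add_group_def mod_add_left_eq\<close>)

lemma card_subgroup_PiE_dvd:
  fixes L :: "('a \<Rightarrow> nat) set"
  assumes p: "0 < p" and A: "finite A" and L: "L \<subseteq> A \<rightarrow>\<^sub>E {..<p}" "L \<noteq> {}"
    and add: "\<And>f g. f \<in> L \<Longrightarrow> g \<in> L \<Longrightarrow> (\<lambda>x\<in>A. (f x + g x) mod p) \<in> L"
    and neg: "\<And>f. f \<in> L \<Longrightarrow> (\<lambda>x\<in>A. (p - f x) mod p) \<in> L"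
  shows "card L dvd p ^ card A"
proof -
  let ?G = "product_group A (\<lambda>_. mod_add_group p)"
  have carrier: "carrier ?G = A \<rightarrow>\<^sub>E {..<p}"
    by (simp add: mod_add_group_def)
  interpret group ?G
    by (simp add: group_mod_add_group p)
  have "subgroup L ?G"
  proof (rule subgroupI)
    fix f assume "f \<in> L"
    moreover from this have "f \<in> carrier ?G" using L carrier by blast
    moreover have "f x < p" if "x \<in> A" "f \<in> carrier ?G" for x
      using that carrier by auto
    ultimately show "inv\<^bsub>?G\<^esub> f \<in> L"
      using neg[of f] p
      by (simp add: inv_mod_add_group group_mod_add_group cong: restrict_cong)
  qed (use L carrier add in \<open>auto simp: mod_add_group_def\<close>)
  then have "card (rcosets\<^bsub>?G\<^esub> L) * card L = card (A \<rightarrow>\<^sub>E {..<p})"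
    using lagrange carrier by (simp add: order_def)
  moreover have "card (A \<rightarrow>\<^sub>E {..<p}) = p ^ card A"
    using A by (simp add: card_PiE)
  ultimately show ?thesis
    by (metis dvd_triv_right)
qed

section \<open>A Tseitin-type instance on the complete graph\<close>

definition row_var :: "nat \<Rightarrow> nat \<Rightarrow> nat" where
  "row_var i k = 2 * prod_encode (i, k)"

definition edge_var :: "nat \<Rightarrow> nat \<Rightarrow> nat" where
  "edge_var i j = Suc (2 * prod_encode (min i j, max i j))"

lemma row_var_eq_iff [simp]: "row_var i k = row_var i' k' \<longleftrightarrow> i = i' \<and> k = k'"
  by (auto simp: row_var_def)

lemma edge_var_neq_row_var [simp]: "edge_var i j \<noteq> row_var a b" "row_var a b \<noteq> edge_var i j"
  unfolding row_var_def edge_var_def by presburger+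

lemma edge_var_eq_iff: "edge_var i j = edge_var a b \<longleftrightarrow> (i = a \<and> j = b) \<or> (i = b \<and> j = a)"
  by (auto simp: edge_var_def min_def max_def split: if_splits)

lemma edge_var_commute: "edge_var i j = edge_var j i"
  by (simp add: edge_var_def min.commute max.commute)

definition grid_vars :: "nat \<Rightarrow> nat set" where
  "grid_vars n = {row_var i k | i k. i < n \<and> k \<le> n} \<union> {edge_var i j | i j. i < n \<and> j < n}"

lemma finite_grid_vars: "finite (grid_vars n)"
  unfolding grid_vars_def by (intro finite_UnI finite_image_set2) auto

lemma row_var_in_grid_vars [simp]: "i < n \<Longrightarrow> k \<le> n \<Longrightarrow> row_var i k \<in> grid_vars n"
  unfolding grid_vars_def by blast

lemma edge_var_in_grid_vars [simp]: "i < n \<Longrightarrow> j < n \<Longrightarrow> edge_var i j \<in> grid_vars n"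
  unfolding grid_vars_def by blast

text \<open>Row i carries the partial sums s(i,k) of the edge values, edge {i,j} entering row i with
  sign + if i \<le> j and with sign - otherwise (the latter written as s(i,k+1) + c(i,k) = s(i,k)).\<close>
definition grid_sums :: "nat \<Rightarrow> nat list set" where
  "grid_sums n = {[row_var i j, edge_var i j, row_var i (Suc j)] | i j. i \<le> j \<and> j < n}
     \<union> {[row_var i (Suc j), edge_var i j, row_var i j] | i j. j < i \<and> i < n}"

definition grid_zeros :: "nat \<Rightarrow> nat list set" where
  "grid_zeros n = {[row_var i 0] | i. i < n} \<union> {[edge_var i i] | i. i < n}
     \<union> {[row_var i n] | i. 0 < i \<and> i < n}"

text \<open>Symbols 1 and 2 of zsig p are the constants 0 and 1. Row 0 must end in 1 and every other
  row in 0, but the row ends add up to 0, since every edge enters two rows with opposite signs.\<close>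
definition grid_instance :: "nat \<Rightarrow> nat struct" where
  "grid_instance n = \<lparr>sdom = (\<lambda>_. grid_vars n),
     srel = (\<lambda>R. if R = 0 then grid_sums n else if R = 1 then grid_zeros n
                 else if R = 2 then {[row_var 0 n]} else {})\<rparr>"

lemma grid_instance_tuples_in_grid_vars:
  "xs \<in> srel (grid_instance n) R \<Longrightarrow> 0 < n \<Longrightarrow> set xs \<subseteq> grid_vars n"
  unfolding grid_instance_def grid_sums_def grid_zeros_def by (auto split: if_splits)

lemma length_grid_instance_tuple:
  "R \<in> {0..p} \<Longrightarrow> xs \<in> srel (grid_instance n) R \<Longrightarrow> length xs = length (ar (zsig p) R)"
  unfolding grid_instance_def grid_sums_def grid_zeros_def zsig_def by (auto split: if_splits)

lemma grid_instance_struct: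
  assumes "0 < n" shows "is_struct (zsig p) (grid_instance n)" "finite_struct (zsig p) (grid_instance n)"
proof -
  show "is_struct (zsig p) (grid_instance n)"
    unfolding is_struct_def
  proof (intro ballI conjI allI impI)
    fix R xs assume R: "R \<in> syms (zsig p)" and xs: "xs \<in> srel (grid_instance n) R"
    then show "length xs = length (ar (zsig p) R)"
      by (intro length_grid_instance_tuple) (simp_all add: zsig_def)
    fix i assume "i < length xs"
    then show "xs ! i \<in> sdom (grid_instance n) (ar (zsig p) R ! i)"
      using grid_instance_tuples_in_grid_vars[OF xs assms] nth_mem by (fastforce simp: grid_instance_def)
  qed
  show "finite_struct (zsig p) (grid_instance n)"
    by (simp add: finite_struct_def grid_instance_def finite_grid_vars)
qed

definition sat_sums :: "nat \<Rightarrow> nat list set \<Rightarrow> (nat \<Rightarrow> nat) \<Rightarrow> bool" where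
  "sat_sums p E F \<longleftrightarrow> (\<forall>a b c. [a, b, c] \<in> E \<longrightarrow> (F a + F b) mod p = F c)"

lemma cong_add_of_mod_eq: "(a + b) mod p = (c::nat) \<Longrightarrow> [int a + int b = int c] (mod int p)"
  by (metis cong_def of_nat_add zmod_int mod_mod_trivial)

lemma sum_sum_antisym:
  fixes a :: "nat \<Rightarrow> nat \<Rightarrow> 'a::linordered_ab_group_add"
  assumes antisym: "\<And>i j. i < n \<Longrightarrow> j < n \<Longrightarrow> a j i = - a i j"
  shows "(\<Sum>i<n. \<Sum>j<n. a i j) = 0"
proof -
  have "(\<Sum>i<n. \<Sum>j<n. a i j) = (\<Sum>i<n. \<Sum>j<n. - a j i)"
    by (intro sum.cong refl antisym) auto
  also have "\<dots> = - (\<Sum>j<n. \<Sum>i<n. a j i)"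
    by (subst sum.swap) (simp add: sum_negf)
  finally show ?thesis by (simp add: equal_neg_zero)
qed

definition signed_edge :: "(nat \<Rightarrow> nat) \<Rightarrow> nat \<Rightarrow> nat \<Rightarrow> int" where
  "signed_edge F i j = (if i \<le> j then int (F (edge_var i j)) else - int (F (edge_var i j)))"

lemma grid_row_cong:
  assumes sat: "sat_sums p (grid_sums n) F" and zero: "F (row_var i 0) = 0"
    and i: "i < n" and k: "k \<le> n"
  shows "[int (F (row_var i k)) = (\<Sum>j<k. signed_edge F i j)] (mod int p)"
  using k
proof (induction k)
  case 0
  show ?case using zero by simp
next
  case (Suc k)
  then have IH: "[int (F (row_var i k)) = (\<Sum>j<k. signed_edge F i j)] (mod int p)" by simp
  have step: "[int (F (row_var i (Suc k))) = int (F (row_var i k)) + signed_edge F i k] (mod int p)"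
  proof (cases "i \<le> k")
    case True
    moreover have "k < n" using Suc.prems by simp
    ultimately have "[row_var i k, edge_var i k, row_var i (Suc k)] \<in> grid_sums n"
      unfolding grid_sums_def by blast
    then have "(F (row_var i k) + F (edge_var i k)) mod p = F (row_var i (Suc k))"
      using sat by (simp add: sat_sums_def)
    then have "[int (F (row_var i k)) + int (F (edge_var i k)) = int (F (row_var i (Suc k)))] (mod int p)"
      by (rule cong_add_of_mod_eq)
    then show ?thesis
      using True by (simp add: signed_edge_def cong_sym_eq)
  next
    case False
    then have "k < i" by simp
    with i have "[row_var i (Suc k), edge_var i k, row_var i k] \<in> grid_sums n"
      unfolding grid_sums_def by blast
    then have "(F (row_var i (Suc k)) + F (edge_var i k)) mod p = F (row_var i k)"
      using sat by (simp add: sat_sums_def)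
    then have "[int (F (row_var i (Suc k))) + int (F (edge_var i k)) = int (F (row_var i k))] (mod int p)"
      by (rule cong_add_of_mod_eq)
    from cong_diff[OF this cong_refl[of "int (F (edge_var i k))"]]
    show ?thesis
      using False by (simp add: signed_edge_def)
  qed
  show ?case
    using cong_trans[OF step cong_add[OF IH cong_refl]] by simp
qed

lemma grid_row_sums_cong:
  assumes sat: "sat_sums p (grid_sums n) F"
    and zero: "\<And>i. i < n \<Longrightarrow> F (row_var i 0) = 0" and diag: "\<And>i. i < n \<Longrightarrow> F (edge_var i i) = 0"
  shows "[(\<Sum>i<n. int (F (row_var i n))) = 0] (mod int p)"
proof -
  have "signed_edge F j i = - signed_edge F i j" if "i < n" "j < n" for i j
    using diag that by (cases i j rule: linorder_cases) (auto simp: signed_edge_def edge_var_commute)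
  then have "(\<Sum>i<n. \<Sum>j<n. signed_edge F i j) = 0" by (rule sum_sum_antisym)
  moreover have "[(\<Sum>i<n. int (F (row_var i n))) = (\<Sum>i<n. \<Sum>j<n. signed_edge F i j)] (mod int p)"
    by (rule cong_sum) (use grid_row_cong[OF sat zero] in auto)
  ultimately show ?thesis by (simp only:)
qed

lemma grid_instance_unsat:
  assumes p: "1 < p" and n: "0 < n"
  shows "\<not> homto (zsig p) (grid_instance n) (zstruct p)"
proof
  assume "homto (zsig p) (grid_instance n) (zstruct p)"
  then obtain h where "hom (zsig p) (grid_instance n) (zstruct p) h" by (auto simp: homto_def)
  then have rel: "\<And>R xs. R \<le> p \<Longrightarrow> xs \<in> srel (grid_instance n) R \<Longrightarrow> map (h 0) xs \<in> srel (zstruct p) R"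
    by (subst (asm) hom_zsig_iff) (auto simp: length_grid_instance_tuple)
  define F where "F = h 0"
  have sat: "sat_sums p (grid_sums n) F"
    using rel[of 0] by (force simp: sat_sums_def grid_instance_def zstruct_sum_iff F_def)
  have zeros: "F x = 0" if "[x] \<in> grid_zeros n" for x
    using rel[of 1 "[x]"] p that by (simp add: grid_instance_def zstruct_const_iff F_def)
  have one: "F (row_var 0 n) = 1"
    using rel[of 2 "[row_var 0 n]"] p by (simp add: grid_instance_def zstruct_const_iff F_def)
  have "[(\<Sum>i<n. int (F (row_var i n))) = 0] (mod int p)"
    by (rule grid_row_sums_cong[OF sat]) (use zeros in \<open>auto simp: grid_zeros_def\<close>)
  moreover have "(\<Sum>i<n. int (F (row_var i n))) = (\<Sum>i\<in>{0}. int (F (row_var i n)))"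
    using n zeros by (intro sum.mono_neutral_right) (auto simp: grid_zeros_def)
  ultimately have "[1 = 0] (mod int p)" using one by simp
  then show False using p by (simp add: cong_def)
qed

section \<open>Solutions with a displaced charge\<close>

lemma grid_sums_subset_grid_vars: "xs \<in> grid_sums n \<Longrightarrow> set xs \<subseteq> grid_vars n"
  unfolding grid_sums_def by auto

lemma sat_sums_add:
  assumes F: "sat_sums p E F" and G: "sat_sums p E G" and V: "\<And>xs. xs \<in> E \<Longrightarrow> set xs \<subseteq> V"
  shows "sat_sums p E (\<lambda>x\<in>V. (F x + G x) mod p)"
  unfolding sat_sums_def
proof (intro allI impI)
  fix a b c assume abc: "[a, b, c] \<in> E"
  have "((F a + G a) mod p + (F b + G b) mod p) mod p = ((F a + F b) mod p + (G a + G b) mod p) mod p"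
    by (simp only: mod_add_eq) (simp only: add_ac)
  also have "\<dots> = (F c + G c) mod p"
    using F G abc by (simp add: sat_sums_def)
  finally show "((\<lambda>x\<in>V. (F x + G x) mod p) a + (\<lambda>x\<in>V. (F x + G x) mod p) b) mod p =
      (\<lambda>x\<in>V. (F x + G x) mod p) c"
    using V[OF abc] by simp
qed

lemma mod_neg_add:
  assumes "a < p" "b < (p::nat)" "(a + b) mod p = c"
  shows "((p - a) mod p + (p - b) mod p) mod p = (p - c) mod p"
proof -
  have c: "c < p" using assms by auto
  have "[int ((p - a) mod p + (p - b) mod p) = (int p - int a) + (int p - int b)] (mod int p)"
    using assms by (simp add: cong_def of_nat_mod mod_add_eq of_nat_diff)
  moreover have "[(int p - int a) + (int p - int b) = int p - int c] (mod int p)"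
  proof -
    have "[int a + int b = int c] (mod int p)"
      using assms(3) by (metis cong_def cong_mod_right of_nat_add of_nat_mod)
    then have "[int p - (int a + int b) + int p = int p - int c + int p] (mod int p)"
      by (intro cong_add cong_diff cong_refl)
    moreover have "[int p - int c + int p = int p - int c] (mod int p)"
      unfolding cong_def by (rule mod_add_self2)
    ultimately show ?thesis
      by (metis (no_types, lifting) add.commute add_diff_eq cong_trans diff_diff_eq2)
  qed
  ultimately have "[int ((p - a) mod p + (p - b) mod p) = int (p - c)] (mod int p)"
    using c by (simp add: of_nat_diff cong_trans)
  then have "[(p - a) mod p + (p - b) mod p = p - c] (mod p)"
    by (metis cong_int_iff of_nat_add)
  then show ?thesis by (simp add: cong_def)
qed

lemma sat_sums_neg:
  assumes F: "sat_sums p E F" and V: "\<And>xs. xs \<in> E \<Longrightarrow> set xs \<subseteq> V"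
    and less: "\<And>x. x \<in> V \<Longrightarrow> F x < p"
  shows "sat_sums p E (\<lambda>x\<in>V. (p - F x) mod p)"
  unfolding sat_sums_def
proof (intro allI impI)
  fix a b c assume abc: "[a, b, c] \<in> E"
  then have V: "a \<in> V" "b \<in> V" "c \<in> V" using V[OF abc] by auto
  moreover have "(F a + F b) mod p = F c" using F abc by (auto simp: sat_sums_def)
  ultimately show "((\<lambda>x\<in>V. (p - F x) mod p) a + (\<lambda>x\<in>V. (p - F x) mod p) b) mod p =
      (\<lambda>x\<in>V. (p - F x) mod p) c"
    using mod_neg_add[OF less[OF V(1)] less[OF V(2)]] by simp
qed

text \<open>Solutions after moving the charge -1 to the end of row d (for d = 0 the two charges cancel);
  they satisfy every constraint of the instance that does not mention row d.\<close>
definition charge :: "nat \<Rightarrow> nat \<Rightarrow> nat \<Rightarrow> nat" where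
  "charge p d i = (if i = d then (if i = 0 then 0 else p - 1) else if i = 0 then 1 else 0)"

definition grid_sols :: "nat \<Rightarrow> nat \<Rightarrow> nat \<Rightarrow> (nat \<Rightarrow> nat) set" where
  "grid_sols n p d = {F \<in> grid_vars n \<rightarrow>\<^sub>E {..<p}. sat_sums p (grid_sums n) F \<and>
     (\<forall>i<n. F (row_var i 0) = 0 \<and> F (edge_var i i) = 0 \<and> F (row_var i n) = charge p d i)}"

lemma grid_sols_PiE: "F \<in> grid_sols n p d \<Longrightarrow> F \<in> grid_vars n \<rightarrow>\<^sub>E {..<p}"
  by (simp add: grid_sols_def)

text \<open>One unit of flow along the edge from d to e: it changes the edge and the partial sums
  of rows d and e beyond columns e and d respectively.\<close>
definition flow :: "nat \<Rightarrow> nat \<Rightarrow> nat \<Rightarrow> nat \<Rightarrow> nat \<Rightarrow> nat" where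
  "flow n p d e x = (if x = edge_var d e then (if d < e then 1 else p - 1)
     else if (\<exists>k. e < k \<and> k \<le> n \<and> x = row_var d k) then 1
     else if (\<exists>k. d < k \<and> k \<le> n \<and> x = row_var e k) then p - 1 else 0)"

lemma flow_row_var: "d \<noteq> e \<Longrightarrow> k \<le> n \<Longrightarrow>
  flow n p d e (row_var i k) = (if i = d \<and> e < k then 1 else if i = e \<and> d < k then p - 1 else 0)"
  unfolding flow_def by auto

lemma flow_edge_var: "flow n p d e (edge_var i j) =
  (if (i = d \<and> j = e) \<or> (i = e \<and> j = d) then (if d < e then 1 else p - 1) else 0)"
  unfolding flow_def by (auto simp: edge_var_eq_iff)

lemma sat_sums_flow:
  assumes "d \<noteq> e" "1 < p" shows "sat_sums p (grid_sums n) (flow n p d e)"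
  unfolding sat_sums_def grid_sums_def
  using assms by (auto simp: flow_row_var flow_edge_var)

definition shift :: "nat \<Rightarrow> nat \<Rightarrow> nat \<Rightarrow> nat \<Rightarrow> (nat \<Rightarrow> nat) \<Rightarrow> nat \<Rightarrow> nat" where
  "shift n p d e F = (\<lambda>x\<in>grid_vars n. (F x + flow n p d e x) mod p)"

lemma shift_mem_grid_sols:
  assumes p: "1 < p" and d: "d < n" and e: "e < n" and de: "d \<noteq> e" and F: "F \<in> grid_sols n p d"
  shows "shift n p d e F \<in> grid_sols n p e"
proof -
  have "shift n p d e F \<in> grid_vars n \<rightarrow>\<^sub>E {..<p}" using p by (simp add: shift_def)
  moreover have "sat_sums p (grid_sums n) (shift n p d e F)"
    unfolding shift_def
    by (rule sat_sums_add) (use F sat_sums_flow[OF de p] grid_sums_subset_grid_vars in \<open>auto simp: grid_sols_def\<close>)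
  moreover have "shift n p d e F (row_var i 0) = 0 \<and> shift n p d e F (edge_var i i) = 0 \<and>
      shift n p d e F (row_var i n) = charge p e i" if i: "i < n" for i
    using F i d e de p by (auto simp: grid_sols_def shift_def flow_row_var flow_edge_var charge_def)
  ultimately show ?thesis by (simp add: grid_sols_def)
qed

lemma shift_shift:
  assumes p: "1 < p" and de: "d \<noteq> e" and F: "F \<in> grid_vars n \<rightarrow>\<^sub>E {..<p}"
  shows "shift n p e d (shift n p d e F) = F"
proof (rule ext)
  fix x
  show "shift n p e d (shift n p d e F) x = F x"
  proof (cases "x \<in> grid_vars n")
    case True
    have "shift n p e d (shift n p d e F) x = ((F x + flow n p d e x) mod p + flow n p e d x) mod p"
      using True by (simp add: shift_def)
    also have "\<dots> = (F x + (flow n p d e x + flow n p e d x) mod p) mod p"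
      by (simp add: mod_add_left_eq mod_add_right_eq add.assoc)
    also have "(flow n p d e x + flow n p e d x) mod p = 0"
      unfolding flow_def using p de by (auto simp: edge_var_commute)
    finally show ?thesis
      using F True by (auto simp: PiE_iff)
  next
    case False
    then show ?thesis by (simp add: shift_def PiE_arb[OF F False])
  qed
qed

lemma shift_eq:
  assumes F: "F \<in> grid_vars n \<rightarrow>\<^sub>E {..<p}"
    and x: "x \<noteq> edge_var d e" "\<forall>k\<le>n. x \<noteq> row_var d k \<and> x \<noteq> row_var e k"
  shows "shift n p d e F x = F x"
proof (cases "x \<in> grid_vars n")
  case True
  then show ?thesis using F x by (auto simp: shift_def flow_def PiE_iff)
next
  case False
  then show ?thesis by (simp add: shift_def PiE_arb[OF F False])
qed

lemma bij_betw_shift: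
  assumes p: "1 < p" and d: "d < n" and e: "e < n" and de: "d \<noteq> e"
  shows "bij_betw (shift n p d e) (grid_sols n p d) (grid_sols n p e)"
proof (rule bij_betw_byWitness[where f'="shift n p e d"])
  show "\<forall>F\<in>grid_sols n p d. shift n p e d (shift n p d e F) = F"
    using shift_shift[OF p de] grid_sols_PiE by blast
  show "\<forall>F\<in>grid_sols n p e. shift n p d e (shift n p e d F) = F"
    using shift_shift[OF p de[symmetric]] grid_sols_PiE by blast
  show "shift n p d e ` grid_sols n p d \<subseteq> grid_sols n p e"
    using shift_mem_grid_sols[OF p d e de] by blast
  show "shift n p e d ` grid_sols n p e \<subseteq> grid_sols n p d"
    using shift_mem_grid_sols[OF p e d de[symmetric]] by blast
qed

lemma finite_grid_sols: "finite (grid_sols n p d)"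
  by (rule finite_subset[of _ "grid_vars n \<rightarrow>\<^sub>E {..<p}"])
    (auto simp: grid_sols_def finite_grid_vars finite_PiE)

definition free_rows :: "nat \<Rightarrow> nat set \<Rightarrow> nat set" where
  "free_rows n T = {i. i < n \<and> (\<forall>k\<le>n. row_var i k \<notin> T)}"

lemma free_rows_antimono: "T \<subseteq> S \<Longrightarrow> free_rows n S \<subseteq> free_rows n T"
  unfolding free_rows_def by blast

lemma card_free_rows:
  assumes T: "finite T" shows "n - card T \<le> card (free_rows n T)"
proof -
  have "{..<n} - free_rows n T \<subseteq> (\<lambda>x. fst (prod_decode (x div 2))) ` T"
  proof
    fix i assume "i \<in> {..<n} - free_rows n T"
    then obtain k where "row_var i k \<in> T" unfolding free_rows_def by auto
    then show "i \<in> (\<lambda>x. fst (prod_decode (x div 2))) ` T"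
      by (rule rev_image_eqI) (simp add: row_var_def)
  qed
  then have "card ({..<n} - free_rows n T) \<le> card T"
    using T card_image_le card_mono finite_imageI le_trans by meson
  moreover have "card ({..<n} - free_rows n T) = n - card (free_rows n T)"
    by (subst card_Diff_subset) (auto simp: free_rows_def)
  ultimately show ?thesis by linarith
qed

lemma free_rows_nonempty: "finite T \<Longrightarrow> card T < n \<Longrightarrow> free_rows n T \<noteq> {}"
  using card_free_rows[of T n] by force

lemma card_edge_neighbours:
  assumes T: "finite T" shows "finite {l. edge_var i l \<in> T}" "card {l. edge_var i l \<in> T} \<le> card T"
proof -
  have inj: "inj_on (edge_var i) {l. edge_var i l \<in> T}"
    by (rule inj_onI) (auto simp: edge_var_eq_iff)
  moreover have sub: "edge_var i ` {l. edge_var i l \<in> T} \<subseteq> T" by blast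
  ultimately show "card {l. edge_var i l \<in> T} \<le> card T"
    using T card_inj_on_le by blast
  show "finite {l. edge_var i l \<in> T}"
    using inj sub T by (meson finite_imageD finite_subset)
qed

lemma common_free_neighbour:
  assumes T: "finite T" and n: "3 * card T + 3 \<le> n"
    and i: "i \<in> free_rows n T" and j: "j \<in> free_rows n T"
  shows "\<exists>l\<in>free_rows n T. l \<noteq> i \<and> l \<noteq> j \<and> edge_var i l \<notin> T \<and> edge_var j l \<notin> T"
proof -
  let ?A = "free_rows n T - {i, j} - {l. edge_var i l \<in> T} - {l. edge_var j l \<in> T}"
  have "card {i, j} \<le> 2" by (simp add: card_insert_if)
  then have "card (free_rows n T) - 2 \<le> card (free_rows n T - {i, j})"
    using diff_card_le_card_Diff[of "{i, j}" "free_rows n T"] by simp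
  moreover have "card (free_rows n T - {i, j}) - card T \<le> card (free_rows n T - {i, j} - {l. edge_var i l \<in> T})"
    using diff_card_le_card_Diff[OF card_edge_neighbours(1)[OF T, of i], of "free_rows n T - {i, j}"]
      card_edge_neighbours(2)[OF T, of i]
    by linarith
  moreover have "card (free_rows n T - {i, j} - {l. edge_var i l \<in> T}) - card T \<le> card ?A"
    using diff_card_le_card_Diff[OF card_edge_neighbours(1)[OF T, of j],
        of "free_rows n T - {i, j} - {l. edge_var i l \<in> T}"]
      card_edge_neighbours(2)[OF T, of j]
    by linarith
  ultimately have "0 < card ?A"
    using card_free_rows[OF T, of n] n by linarith
  then obtain l where "l \<in> ?A" by (metis card.empty less_irrefl ex_in_conv)
  then show ?thesis by blast
qed

lemma grid_sols_bij_fixing: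
  assumes p: "1 < p" and T: "finite T" and n: "3 * card T + 3 \<le> n"
    and i: "i \<in> free_rows n T" and j: "j \<in> free_rows n T"
  shows "\<exists>b. bij_betw b (grid_sols n p i) (grid_sols n p j) \<and> (\<forall>F\<in>grid_sols n p i. \<forall>x\<in>T. b F x = F x)"
proof (cases "i = j")
  case True
  then show ?thesis by (intro exI[of _ id]) auto
next
  case False
  obtain l where l: "l \<in> free_rows n T" "l \<noteq> i" "l \<noteq> j" and edges: "edge_var i l \<notin> T" "edge_var j l \<notin> T"
    using common_free_neighbour[OF T n i j] by blast
  have rows: "i < n" "j < n" "l < n" using i j l by (auto simp: free_rows_def)
  have "bij_betw (shift n p l j \<circ> shift n p i l) (grid_sols n p i) (grid_sols n p j)"
    using bij_betw_trans[OF bij_betw_shift bij_betw_shift] p rows l by auto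
  moreover have "(shift n p l j \<circ> shift n p i l) F x = F x" if F: "F \<in> grid_sols n p i" and x: "x \<in> T" for F x
  proof -
    have not_row: "x \<noteq> row_var a k" if "a \<in> free_rows n T" "k \<le> n" for a k
      using x that unfolding free_rows_def by blast
    have "shift n p i l F \<in> grid_sols n p l" using shift_mem_grid_sols p rows l F by auto
    then have "shift n p l j (shift n p i l F) x = shift n p i l F x"
      using edges x not_row i j l by (intro shift_eq grid_sols_PiE) (auto simp: edge_var_commute)
    also have "\<dots> = F x"
      using edges x not_row i l by (intro shift_eq grid_sols_PiE[OF F]) auto
    finally show ?thesis by simp
  qed
  ultimately show ?thesis by blast
qed

lemma sum_grid_sols_free_row_indep:
  assumes p: "1 < p" and n: "3 * card (set w) + 3 \<le> n"
    and i: "i \<in> free_rows n (set w)" and j: "j \<in> free_rows n (set w)"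
  shows "(\<Sum>F\<in>grid_sols n p i. g (map F w)) = (\<Sum>F\<in>grid_sols n p j. g (map F w))"
proof -
  obtain b where b: "bij_betw b (grid_sols n p i) (grid_sols n p j)"
    and fix_w: "\<forall>F\<in>grid_sols n p i. \<forall>x\<in>set w. b F x = F x"
    using grid_sols_bij_fixing[OF p _ n i j] by blast
  have "(\<Sum>F\<in>grid_sols n p i. g (map F w)) = (\<Sum>F\<in>grid_sols n p i. g (map (b F) w))"
    using fix_w by (intro sum.cong refl) (simp cong: map_cong)
  also have "\<dots> = (\<Sum>F\<in>grid_sols n p j. g (map F w))"
    by (rule sum.reindex_bij_betw[OF b])
  finally show ?thesis .
qed

lemma zero_mem_grid_sols: "1 < p \<Longrightarrow> (\<lambda>x\<in>grid_vars n. 0) \<in> grid_sols n p 0"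
  by (auto simp: grid_sols_def sat_sums_def grid_sums_def charge_def)

lemma grid_sols_nonempty:
  assumes p: "1 < p" and d: "d < n" shows "grid_sols n p d \<noteq> {}"
proof (cases "d = 0")
  case False
  then have "shift n p 0 d (\<lambda>x\<in>grid_vars n. 0) \<in> grid_sols n p d"
    using shift_mem_grid_sols[OF p _ d] zero_mem_grid_sols[OF p] d by auto
  then show ?thesis by blast
qed (use zero_mem_grid_sols[OF p] in blast)

lemma card_grid_sols:
  assumes "1 < p" "d < n" shows "card (grid_sols n p d) = card (grid_sols n p 0)"
  using bij_betw_same_card[OF bij_betw_shift[of p 0 n d]] assms by (cases "d = 0") auto

lemma coprime_card_grid_sols:
  assumes p: "prime p" and q: "prime q" and pq: "p \<noteq> q"
  shows "coprime (card (grid_sols n p 0)) q"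
proof -
  have p1: "1 < p" using p prime_gt_1_nat by blast
  have boundary: "F \<in> grid_sols n p 0 \<Longrightarrow> i < n \<Longrightarrow>
      F (row_var i 0) = 0 \<and> F (edge_var i i) = 0 \<and> F (row_var i n) = 0" for F i
    by (auto simp: grid_sols_def charge_def)
  have "card (grid_sols n p 0) dvd p ^ card (grid_vars n)"
  proof (rule card_subgroup_PiE_dvd)
    show "grid_sols n p 0 \<subseteq> grid_vars n \<rightarrow>\<^sub>E {..<p}" by (auto simp: grid_sols_def)
    show "grid_sols n p 0 \<noteq> {}" using zero_mem_grid_sols[OF p1] by blast
  next
    fix F G assume F: "F \<in> grid_sols n p 0" and G: "G \<in> grid_sols n p 0"
    then show "(\<lambda>x\<in>grid_vars n. (F x + G x) mod p) \<in> grid_sols n p 0"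
      using sat_sums_add[OF _ _ grid_sums_subset_grid_vars] boundary[OF F] boundary[OF G] p1
      by (auto simp: grid_sols_def charge_def)
  next
    fix F assume F: "F \<in> grid_sols n p 0"
    then show "(\<lambda>x\<in>grid_vars n. (p - F x) mod p) \<in> grid_sols n p 0"
      using sat_sums_neg[OF _ grid_sums_subset_grid_vars] boundary[OF F] p1
      by (auto simp: grid_sols_def charge_def PiE_iff)
  qed (use p1 finite_grid_vars in auto)
  moreover have "coprime (p ^ card (grid_vars n)) q"
    using primes_coprime[OF p q pq] by simp
  ultimately show ?thesis using coprime_divisors[OF _ dvd_refl] by blast
qed

section \<open>Duplicator's strategy and the averaging argument\<close>

definition grid_adm :: "nat \<Rightarrow> nat \<Rightarrow> nat set \<Rightarrow> (nat \<Rightarrow> nat) \<Rightarrow> bool" where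
  "grid_adm n p T F \<longleftrightarrow> (\<exists>i\<in>free_rows n T. F \<in> grid_sols n p i)"

lemma grid_sols_map_tuple:
  assumes p: "1 < p" and i: "i \<in> free_rows n S" and F: "F \<in> grid_sols n p i"
    and xs: "xs \<in> srel (grid_instance n) R" and S: "set xs \<subseteq> S"
  shows "map F xs \<in> srel (zstruct p) R"
proof -
  have less: "F x < p" if "x \<in> grid_vars n" for x
    using F that by (auto simp: grid_sols_def)
  have sat: "sat_sums p (grid_sums n) F"
    and boundary: "\<And>i'. i' < n \<Longrightarrow> F (row_var i' 0) = 0 \<and> F (edge_var i' i') = 0 \<and> F (row_var i' n) = charge p i i'"
    using F by (auto simp: grid_sols_def)
  have row_i: "row_var i n \<notin> S" and "0 < n" using i by (auto simp: free_rows_def)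
  consider "R = 0" | "R = 1" | "R = 2" | "2 < R" by linarith
  then show ?thesis
  proof cases
    case 1
    then have E: "xs \<in> grid_sums n" using xs by (simp add: grid_instance_def)
    then obtain a b c where abc: "xs = [a, b, c]" by (auto simp: grid_sums_def)
    then have "a \<in> grid_vars n" "b \<in> grid_vars n" "c \<in> grid_vars n"
      using grid_sums_subset_grid_vars[OF E] by auto
    then show ?thesis
      using 1 E abc sat less by (auto simp: sat_sums_def zstruct_sum_iff)
  next
    case 2
    then have "xs \<in> grid_zeros n" using xs by (simp add: grid_instance_def)
    then show ?thesis
      using 2 boundary row_i S by (auto simp: grid_zeros_def zstruct_const_iff charge_def)
  next
    case 3
    then have "xs = [row_var 0 n]" using xs by (simp add: grid_instance_def)
    moreover have "i \<noteq> 0" using row_i S calculation by (cases "i = 0") auto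
    ultimately show ?thesis
      using 3 boundary \<open>0 < n\<close> by (simp add: zstruct_const_iff charge_def)
  next
    case 4
    then show ?thesis using xs by (simp add: grid_instance_def)
  qed
qed

lemma grid_pebble_strategy:
  assumes p: "1 < p" and K: "3 \<le> K" and n: "3 * K + 3 \<le> n"
  shows "pebble_strategy (zsig p) (grid_instance n) (zstruct p) (grid_adm n p) K"
proof
  fix S F t x
  assume "grid_adm n p S F" "t \<in> tys (zsig p)" "x \<in> sdom (grid_instance n) t"
  then show "F x \<in> sdom (zstruct p) t"
    by (auto simp: grid_adm_def grid_sols_def grid_instance_def zstruct_def)
next
  fix S F R xs
  assume "grid_adm n p S F" "xs \<in> srel (grid_instance n) R" "set xs \<subseteq> S"
  then show "map F xs \<in> srel (zstruct p) R"
    using grid_sols_map_tuple[OF p] by (auto simp: grid_adm_def)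
next
  fix S T F
  assume "grid_adm n p S F" "T \<subseteq> S"
  then show "grid_adm n p T F"
    using free_rows_antimono[of T S n] by (auto simp: grid_adm_def)
next
  fix T S F
  assume adm: "grid_adm n p T F" and TS: "T \<subseteq> S" and S: "finite S" "card S \<le> K"
  obtain i where i: "i \<in> free_rows n T" and F: "F \<in> grid_sols n p i"
    using adm by (auto simp: grid_adm_def)
  obtain j where j: "j \<in> free_rows n S"
    using free_rows_nonempty[OF S(1)] S(2) n by fastforce
  have T: "finite T" "3 * card T + 3 \<le> n"
    using S TS n card_mono[OF S(1) TS] finite_subset by auto
  obtain b where b: "bij_betw b (grid_sols n p i) (grid_sols n p j)"
    and fix_T: "\<forall>F\<in>grid_sols n p i. \<forall>x\<in>T. b F x = F x"
    using grid_sols_bij_fixing[OF p T i] j free_rows_antimono[OF TS] by blast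
  show "\<exists>F'. grid_adm n p S F' \<and> (\<forall>x\<in>T. F' x = F x)"
    using bij_betwE[OF b] F fix_T j by (auto simp: grid_adm_def)
next
  fix R xs
  assume "R \<in> syms (zsig p)" "xs \<in> srel (grid_instance n) R"
  then have "length xs \<le> 3"
    using length_grid_instance_tuple[of R p] by (auto simp: zsig_def)
  then show "card (set xs) \<le> K" using card_length[of xs] K by linarith
qed

lemma length_reduction_tuple:
  assumes "wf_ugad Sg S' u" and "xs \<in> srel (apply_ugad Sg u (apply_dint Src Sg phi A)) R'"
  shows "length xs = length (ar S' R')"
proof -
  obtain R ws where R: "R \<in> syms Sg" "ur u R = R'" and ws: "ws \<in> srel (apply_dint Src Sg phi A) R"
    and xs: "xs = map (\<lambda>i. (ar Sg R ! i, ws ! i)) [0..<length ws]"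
    using assms(2) by (auto simp: apply_ugad_def)
  have "ar S' R' = map (ud u) (ar Sg R)"
    using assms(1) R by (auto simp: wf_ugad_def)
  with ws xs show ?thesis by (simp add: apply_dint_def)
qed

lemma exists_dint_width_le:
  assumes "wf_sig Sg" shows "\<exists>K\<ge>k. dint_width_le K Sg phi"
proof -
  let ?Ps = "dt phi ` tys Sg \<union> dr phi ` syms Sg"
  let ?widths = "\<Union>P\<in>?Ps. (\<lambda>r. card (rule_vars r)) ` set (prules P)"
  define M where "M = Max (insert k ?widths)"
  have "finite ?widths" using assms by (simp add: wf_sig_def)
  then have "card (rule_vars r) \<le> M" if "P \<in> ?Ps" "r \<in> set (prules P)" for P r
    unfolding M_def using that by (intro Max_ge) auto
  then have "dint_width_le M Sg phi"
    unfolding dint_width_le_def dl_width_le_def by blast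
  moreover have "k \<le> M" unfolding M_def using \<open>finite ?widths\<close> by simp
  ultimately show ?thesis by blast
qed

definition grid_average ::
    "nat \<Rightarrow> nat \<Rightarrow> nat \<Rightarrow> nat \<Rightarrow> ('a \<times> nat list \<Rightarrow> nat) \<Rightarrow> 'a \<times> nat list \<Rightarrow> nat" where
  "grid_average n p q c H x =
     c * (\<Sum>F\<in>grid_sols n p (SOME i. i \<in> free_rows n (set (snd x))). H (apsnd (map F) x)) mod q"

lemma grid_average_eq:
  assumes p: "1 < p" and n: "3 * card (set (snd x)) + 3 \<le> n" and i: "i \<in> free_rows n (set (snd x))"
  shows "grid_average n p q c H x = c * (\<Sum>F\<in>grid_sols n p i. H (apsnd (map F) x)) mod q"
proof -
  have "(SOME i. i \<in> free_rows n (set (snd x))) \<in> free_rows n (set (snd x))"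
    using i by (rule someI)
  from sum_grid_sols_free_row_indep[OF p n this i, of "\<lambda>w. H (fst x, w)"]
  have "(\<Sum>F\<in>grid_sols n p (SOME i. i \<in> free_rows n (set (snd x))). H (fst x, map F (snd x))) =
      (\<Sum>F\<in>grid_sols n p i. H (fst x, map F (snd x)))" .
  moreover have apsnd_x: "apsnd (map F) x = (fst x, map F (snd x))" for F by (cases x) simp
  ultimately show ?thesis by (simp add: grid_average_def apsnd_x)
qed

lemma homto_reduction_grid_instance:
  assumes p: "prime p" and q: "prime q" and pq: "p \<noteq> q"
    and wf: "wf_dint (zsig p) Sg phi" and wfu: "wf_ugad Sg (zsig q) u"
    and width: "dint_width_le K Sg phi" and K: "3 \<le> K" and n: "3 * K + 3 \<le> n"
    and hom: "homto (zsig q) (apply_ugad Sg u (apply_dint (zsig p) Sg phi (zstruct p))) (zstruct q)"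
  shows "homto (zsig q) (apply_ugad Sg u (apply_dint (zsig p) Sg phi (grid_instance n))) (zstruct q)"
proof -
  let ?psi = "\<lambda>A. apply_ugad Sg u (apply_dint (zsig p) Sg phi A)"
  have p1: "1 < p" and q1: "1 < q" using p q prime_gt_1_nat by blast+
  interpret pebble_strategy "zsig p" "grid_instance n" "zstruct p" "grid_adm n p" K
    by (rule grid_pebble_strategy[OF p1 K n])
  obtain H where "hom (zsig q) (?psi (zstruct p)) (zstruct q) H"
    using hom by (auto simp: homto_def)
  then have H: "\<And>R xs. R \<le> q \<Longrightarrow> xs \<in> srel (?psi (zstruct p)) R \<Longrightarrow> map (H 0) xs \<in> srel (zstruct q) R"
    by (subst (asm) hom_zsig_iff) (auto simp: length_reduction_tuple[OF wfu])
  obtain c where c: "[card (grid_sols n p 0) * c = 1] (mod q)"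
    using cong_solve_coprime_nat[OF coprime_card_grid_sols[OF p q pq, of n]] by auto
  let ?G = "grid_average n p q c (H 0)"
  have "map ?G xs \<in> srel (zstruct q) R"
    if R: "R \<le> q" and xs: "xs \<in> srel (?psi (grid_instance n)) R" for R xs
  proof -
    define T where "T = (\<Union>x\<in>set xs. set (snd x))"
    have T: "finite T" "card T \<le> K"
      using reduction_tuple_transfer(1)[OF wf width xs] by (auto simp: T_def)
    obtain i where i: "i \<in> free_rows n T"
      using free_rows_nonempty[OF T(1)] T(2) n by fastforce
    then have "i < n" by (simp add: free_rows_def)
    have "map (\<lambda>x. c * (\<Sum>F\<in>grid_sols n p i. H 0 (apsnd (map F) x)) mod q) xs \<in> srel (zstruct q) R"
    proof (rule zstruct_affine_comb[OF q1 R finite_grid_sols grid_sols_nonempty[OF p1 \<open>i < n\<close>]])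
      show "[card (grid_sols n p i) * c = 1] (mod q)"
        using c card_grid_sols[OF p1 \<open>i < n\<close>] by simp
      fix F assume "F \<in> grid_sols n p i"
      then have "grid_adm n p T F" using i by (auto simp: grid_adm_def)
      then have "map (apsnd (map F)) xs \<in> srel (?psi (zstruct p)) R"
        unfolding T_def by (rule reduction_tuple_transfer(2)[OF wf width xs])
      from H[OF R this] show "map (\<lambda>x. H 0 (apsnd (map F) x)) xs \<in> srel (zstruct q) R"
        by (simp add: comp_def)
    qed
    moreover have "?G x = c * (\<Sum>F\<in>grid_sols n p i. H 0 (apsnd (map F) x)) mod q" if "x \<in> set xs" for x
    proof (rule grid_average_eq[OF p1])
      have sub: "set (snd x) \<subseteq> T" using that by (auto simp: T_def)
      then show "3 * card (set (snd x)) + 3 \<le> n" using T card_mono[OF T(1) sub] n by linarith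
      show "i \<in> free_rows n (set (snd x))" using free_rows_antimono[OF sub] i by blast
    qed
    ultimately show ?thesis by (simp cong: map_cong)
  qed
  moreover have "?G x \<in> sdom (zstruct q) 0" for x
    using q1 by (simp add: grid_average_def zstruct_def)
  ultimately have "hom (zsig q) (?psi (grid_instance n)) (zstruct q) (\<lambda>_. ?G)"
    by (subst hom_zsig_iff) (auto simp: length_reduction_tuple[OF wfu])
  then show ?thesis by (auto simp: homto_def)
qed

theorem mainTheorem12:
  fixes p q :: nat
  assumes "prime p" and "prime q" and "p \<noteq> q"
  shows "\<not> dl_le (zsig p) (zstruct p) (zsig q) (zstruct q)"
proof
  assume "dl_le (zsig p) (zstruct p) (zsig q) (zstruct q)"
  then obtain Sg phi u where wf: "wf_dint (zsig p) Sg phi" and wfu: "wf_ugad Sg (zsig q) u"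
    and red: "is_reduction (zsig p) (zstruct p) (zsig q) (zstruct q)
      (\<lambda>X. apply_ugad Sg u (apply_dint (zsig p) Sg phi X))"
    unfolding dl_le_def by blast
  let ?psi = "\<lambda>X. apply_ugad Sg u (apply_dint (zsig p) Sg phi X)"
  have reduces: "homto (zsig p) X (zstruct p) \<longleftrightarrow> homto (zsig q) (?psi X) (zstruct q)"
    if "is_struct (zsig p) X" "finite_struct (zsig p) X" for X :: "nat struct"
    using red that unfolding is_reduction_def by blast
  have "wf_sig Sg" using wf by (simp add: wf_dint_def)
  then obtain K where K: "3 \<le> K" and width: "dint_width_le K Sg phi"
    using exists_dint_width_le by blast
  let ?n = "3 * K + 3"
  have "homto (zsig q) (?psi (zstruct p)) (zstruct q)"
    using reduces[OF zstruct_struct] homto_zstruct_self by blast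
  then have "homto (zsig q) (?psi (grid_instance ?n)) (zstruct q)"
    by (rule homto_reduction_grid_instance[OF assms wf wfu width K order_refl])
  then have "homto (zsig p) (grid_instance ?n) (zstruct p)"
    using reduces[OF grid_instance_struct] by simp
  then show False
    using grid_instance_unsat prime_gt_1_nat[OF assms(1)] by simp
qed

end
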